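(* Let $u$ be a nonempty word, let $s$ be a nonempty prefix of $u$, and let $j$ be the length of the longest prefix of $u$ covered by $s$. Then $s$ is a left seed of $u$ if and only if $j\ge \mathrm{per}(u)$. In particular, if $s$ is the shortest left seed of $u$, then $s$ is the shortest cover of the prefix $u[1..j]$.
   Context: Positions in a word $u$ are numbered $1,\dots,|u|$; $u[i..j]=u_i\cdots u_j$. For a nonempty word $x$, $\mathrm{per}(x)$ is the smallest positive integer $p$ with $x_i=x_{i+p}$ for all $1\le i\le|x|-p$. A word $s$ covers a word $w$ (is a cover of $w$) if every position of $w$ lies inside some occurrence of $s$ as a factor of $w$. A word $s$ is a seed of $u$ if $s$ is a factor of $u$ and $u$ is a factor of some word covered by $s$; $s$ is a left seed of $u$ if $s$ is both a prefix of $u$ and a seed of $u$. *)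

theory Defs
  imports Main "HOL-Library.Sublist"
begin

text \<open>Words are lists. Positions are 0-based here (paper: 1-based).\<close>

definition factor :: "'a list \<Rightarrow> 'a list \<Rightarrow> bool" where
  "factor x w \<longleftrightarrow> (\<exists>p q. w = p @ x @ q)"

definition occurs_at :: "'a list \<Rightarrow> 'a list \<Rightarrow> nat \<Rightarrow> bool" where
  "occurs_at x w i \<longleftrightarrow> i + length x \<le> length w \<and> take (length x) (drop i w) = x"

definition covers :: "'a list \<Rightarrow> 'a list \<Rightarrow> bool" where
  "covers s w \<longleftrightarrow> (\<forall>k < length w. \<exists>i. occurs_at s w i \<and> i \<le> k \<and> k < i + length s)"

definition per :: "'a list \<Rightarrow> nat" where
  "per x = (LEAST p. 0 < p \<and> (\<forall>i. i + p < length x \<longrightarrow> x ! i = x ! (i + p)))"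

definition seed :: "'a list \<Rightarrow> 'a list \<Rightarrow> bool" where
  "seed s u \<longleftrightarrow> factor s u \<and> (\<exists>w. covers s w \<and> factor u w)"

definition left_seed :: "'a list \<Rightarrow> 'a list \<Rightarrow> bool" where
  "left_seed s u \<longleftrightarrow> prefix s u \<and> seed s u"

definition longest_covered_prefix :: "'a list \<Rightarrow> 'a list \<Rightarrow> nat" where
  "longest_covered_prefix s u = (GREATEST j. j \<le> length u \<and> covers s (take j u))"

end

theory Submission
  imports Defs
begin

text \<open>
  If the longest prefix of \<open>u\<close> covered by \<open>s\<close> has length \<open>j \<ge> per u\<close>, then
  translating a covering of \<open>u[1..j]\<close> by multiples of \<open>per u\<close> covers the
  \<open>per u\<close>-periodic extension of \<open>u\<close>, so \<open>s\<close> is a left seed. Conversely, take a word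
  covered by \<open>s\<close> containing \<open>u\<close> and an occurrence of \<open>s\<close> over position \<open>j + 1\<close> of
  \<open>u\<close>, starting at \<open>q \<le> j\<close> in \<open>u\<close>. If it ends inside \<open>u\<close>, then it extends the covered
  prefix beyond \<open>j\<close>; otherwise it overhangs the end of \<open>u\<close> and, as \<open>s\<close> is a prefix
  of \<open>u\<close>, \<open>q\<close> is a period of \<open>u\<close>, so \<open>per u \<le> q \<le> j\<close>.
  Finally, a cover of \<open>u[1..j]\<close> is a prefix of \<open>u\<close> covering \<open>u[1..j]\<close>, hence a left
  seed by the criterion, so the shortest left seed is its shortest cover.
\<close>

lemma occurs_at_iff_nth:
  "occurs_at x w i \<longleftrightarrow> i + length x \<le> length w \<and> (\<forall>t<length x. w ! (i + t) = x ! t)"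
  unfolding occurs_at_def
proof (intro iffI conjI allI impI; (elim conjE)?)
  fix t assume "i + length x \<le> length w" "take (length x) (drop i w) = x" "t < length x"
  then show "w ! (i + t) = x ! t" by (metis add_leD1 nth_drop nth_take)
qed (auto intro!: nth_equalityI)

lemma occurs_at_take:
  "occurs_at x (take n w) i \<longleftrightarrow> i + length x \<le> n \<and> occurs_at x w i"
  by (auto simp: occurs_at_iff_nth)

lemma occurs_at_0_iff_prefix: "occurs_at x w 0 \<longleftrightarrow> prefix x w"
  unfolding occurs_at_def prefix_def by (metis append_eq_conv_conj drop0 le_add1 length_append add_0)

lemma prefix_imp_factor: "prefix x w \<Longrightarrow> factor x w"
  unfolding prefix_def factor_def by (metis append_Nil)

lemma prefix_nth: "prefix s u \<Longrightarrow> t < length s \<Longrightarrow> u ! t = s ! t"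
  by (auto simp: prefix_def nth_append)

definition period :: "'a list \<Rightarrow> nat \<Rightarrow> bool" where
  "period u p \<longleftrightarrow> 0 < p \<and> (\<forall>i. i + p < length u \<longrightarrow> u ! i = u ! (i + p))"

lemma per_eq_Least_period: "per u = (LEAST p. period u p)"
  unfolding per_def period_def ..

lemma period_length: "u \<noteq> [] \<Longrightarrow> period u (length u)"
  by (simp add: period_def)

lemma period_per: "u \<noteq> [] \<Longrightarrow> period u (per u)"
  unfolding per_eq_Least_period by (rule LeastI, rule period_length)

lemma per_le_period: "period u p \<Longrightarrow> per u \<le> p"
  unfolding per_eq_Least_period by (rule Least_le)

lemma per_le_length: "u \<noteq> [] \<Longrightarrow> per u \<le> length u"
  by (rule per_le_period, rule period_length)

lemma period_nth_add_mult:
  assumes "period u p" and "i + k * p < length u"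
  shows "u ! (i + k * p) = u ! i"
  using assms(2)
proof (induction k)
  case (Suc k)
  then have "u ! (i + k * p) = u ! (i + k * p + p)"
    using assms(1) by (simp add: period_def)
  with Suc show ?case by (simp add: algebra_simps)
qed simp

lemma period_nth_mod:
  assumes "period u p" and "i < length u"
  shows "u ! (i mod p) = u ! i"
  using period_nth_add_mult[OF assms(1), of "i mod p" "i div p"] assms(2) by simp

lemma longest_covered_prefix:
  "longest_covered_prefix s u \<le> length u \<and> covers s (take (longest_covered_prefix s u) u)"
  unfolding longest_covered_prefix_def
  by (rule GreatestI_nat[where k = 0 and b = "length u"]) (auto simp: covers_def)

lemma longest_covered_prefix_le_length: "longest_covered_prefix s u \<le> length u"
  using longest_covered_prefix by blast

lemma covers_take_longest_covered_prefix: "covers s (take (longest_covered_prefix s u) u)"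
  using longest_covered_prefix by blast

lemma covers_take_le_longest_covered_prefix:
  "j \<le> length u \<Longrightarrow> covers s (take j u) \<Longrightarrow> j \<le> longest_covered_prefix s u"
  unfolding longest_covered_prefix_def by (rule Greatest_le_nat[where b = "length u"]) auto

lemma covers_take_length_prefix:
  assumes "prefix s u"
  shows "covers s (take (length s) u)"
proof -
  have "occurs_at s (take (length s) u) 0"
    using assms prefix_length_le[OF assms] by (auto simp: occurs_at_iff_nth prefix_nth)
  then show ?thesis
    unfolding covers_def by (intro allI impI exI[of _ 0]) auto
qed

lemma length_le_longest_covered_prefix:
  "prefix s u \<Longrightarrow> length s \<le> longest_covered_prefix s u"
  by (rule covers_take_le_longest_covered_prefix)
    (auto intro: prefix_length_le covers_take_length_prefix)

lemma covers_take_append_occurrence: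
  assumes "covers s (take j u)" and "q \<le> j" and "occurs_at s (take (q + length s) u) q"
  shows "covers s (take (q + length s) u)"
  unfolding covers_def
proof (intro allI impI)
  fix k assume k: "k < length (take (q + length s) u)"
  show "\<exists>i. occurs_at s (take (q + length s) u) i \<and> i \<le> k \<and> k < i + length s"
  proof (cases "k < q")
    case True
    with k have "k < length (take j u)" using assms(2) by simp
    then obtain i where "occurs_at s (take j u) i" "i \<le> k" "k < i + length s"
      using assms(1) unfolding covers_def by blast
    with True show ?thesis by (intro exI[of _ i]) (auto simp: occurs_at_take)
  next
    case False
    with k assms(3) show ?thesis by (intro exI[of _ q]) auto
  qed
qed

lemma occurrence_end_le_longest_covered_prefix:
  assumes "occurs_at s u q" and "q \<le> longest_covered_prefix s u"
  shows "q + length s \<le> longest_covered_prefix s u"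
proof (rule covers_take_le_longest_covered_prefix)
  show "q + length s \<le> length u"
    using assms(1) by (simp add: occurs_at_def)
  show "covers s (take (q + length s) u)"
    using covers_take_append_occurrence[OF covers_take_longest_covered_prefix assms(2)] assms(1)
    by (simp add: occurs_at_take)
qed

lemma period_if_prefix_overhangs:
  assumes "prefix s u" and "0 < q" and "length u \<le> q + length s"
    and "\<And>x. q + x < length u \<Longrightarrow> u ! (q + x) = s ! x"
  shows "period u q"
  unfolding period_def
proof (intro conjI allI impI)
  fix x assume x: "x + q < length u"
  with assms(3) have "x < length s" by simp
  with x assms(4)[of x] show "u ! x = u ! (x + q)"
    by (simp add: prefix_nth[OF assms(1)] add.commute)
qed (fact assms(2))

lemma left_seed_imp_per_le_longest_covered_prefix:
  assumes "u \<noteq> []" and "left_seed s u"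
  shows "per u \<le> longest_covered_prefix s u"
proof -
  define L where "L = longest_covered_prefix s u"
  have pre: "prefix s u" using assms(2) by (simp add: left_seed_def)
  have sL: "length s \<le> L" unfolding L_def by (rule length_le_longest_covered_prefix[OF pre])
  show ?thesis
  proof (cases "L < length u")
    case False
    then show ?thesis using per_le_length[OF assms(1)] L_def by simp
  next
    case True
    obtain w where "covers s w" and "factor u w"
      using assms(2) by (auto simp: left_seed_def seed_def)
    then obtain a b where "covers s (a @ u @ b)"
      by (auto simp: factor_def)
    then obtain i where occ: "occurs_at s (a @ u @ b) i"
      and i: "i \<le> length a + L" "length a + L < i + length s"
      using True unfolding covers_def by (metis length_append add_less_mono1 trans_less_add1 add.commute)
    define q where "q = i - length a"
    have q: "q \<le> L" "L < q + length s" "i = length a + q"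
      using i sL unfolding q_def by auto
    have u_q: "u ! (q + x) = s ! x" if "x < length s" "q + x < length u" for x
    proof -
      have "(a @ u @ b) ! (length a + (q + x)) = s ! x"
        using occ that(1) q(3) by (simp add: occurs_at_iff_nth add.assoc)
      then show ?thesis using that(2) by (simp add: nth_append_length_plus nth_append)
    qed
    show ?thesis
    proof (cases "q + length s \<le> length u")
      case True
      then have "occurs_at s u q" by (simp add: occurs_at_iff_nth u_q)
      then show ?thesis
        using occurrence_end_le_longest_covered_prefix q(1,2) L_def by fastforce
    next
      case False
      have "0 < q" using False prefix_length_le[OF pre] by (cases q) auto
      with False have "period u q"
        by (intro period_if_prefix_overhangs[OF pre]) (auto intro: u_q)
      then show ?thesis using per_le_period q(1) L_def by fastforce
    qed
  qed
qed

definition periodic_extension :: "'a list \<Rightarrow> nat \<Rightarrow> nat \<Rightarrow> 'a list" where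
  "periodic_extension u p n = map (\<lambda>i. u ! (i mod p)) [0..<n]"

lemma length_periodic_extension [simp]: "length (periodic_extension u p n) = n"
  by (simp add: periodic_extension_def)

lemma nth_periodic_extension: "i < n \<Longrightarrow> periodic_extension u p n ! i = u ! (i mod p)"
  by (simp add: periodic_extension_def)

lemma prefix_periodic_extension:
  assumes "period u p" and "length u \<le> n"
  shows "prefix u (periodic_extension u p n)"
proof -
  have "take (length u) (periodic_extension u p n) = u"
    using assms by (intro nth_equalityI) (auto simp: nth_periodic_extension period_nth_mod)
  then show ?thesis by (metis take_is_prefix)
qed

lemma occurs_at_periodic_extension:
  assumes "period u p" and "occurs_at s u i" and "c * p + i + length s \<le> n"
  shows "occurs_at s (periodic_extension u p n) (c * p + i)"
  unfolding occurs_at_iff_nth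
proof (intro conjI allI impI)
  fix t assume t: "t < length s"
  have "periodic_extension u p n ! (c * p + i + t) = u ! ((i + t) mod p)"
    using assms(3) t by (simp add: nth_periodic_extension add.assoc)
  also have "\<dots> = s ! t"
    using assms(2) t by (simp add: period_nth_mod[OF assms(1)] occurs_at_iff_nth)
  finally show "periodic_extension u p n ! (c * p + i + t) = s ! t" by (simp add: add.assoc)
qed (use assms(3) in simp)

text \<open>Each position lies within distance \<open>j\<close> after one of the shifts \<open>0, p, \<dots>, k p\<close>, and
  the covering of \<open>u[1..j]\<close> moved by that shift covers it.\<close>

lemma covers_periodic_extension:
  assumes "period u p" and "p \<le> j" and "j \<le> length u" and "covers s (take j u)"
  shows "covers s (periodic_extension u p (k * p + j))"
  unfolding covers_def
proof (intro allI impI)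
  fix x assume x: "x < length (periodic_extension u p (k * p + j))"
  define c where "c = min (x div p) k"
  have cx: "c * p \<le> x"
    unfolding c_def by (metis div_times_less_eq_dividend min.cobounded1 mult_le_mono1 order_trans)
  have "x - c * p < j"
  proof (cases "x div p \<le> k")
    case True
    then have "x - c * p = x mod p" by (simp add: c_def minus_div_mult_eq_mod)
    then show ?thesis using assms(1,2) by (simp add: period_def order_less_le_trans[OF mod_less_divisor])
  next
    case False
    then show ?thesis using x cx by (simp add: c_def)
  qed
  with assms(3,4) obtain i where occ: "occurs_at s (take j u) i"
    and i: "i \<le> x - c * p" "x - c * p < i + length s"
    unfolding covers_def by fastforce
  have "c * p \<le> k * p" by (simp add: c_def mult_le_mono1)
  moreover have "i + length s \<le> j" using occ by (simp add: occurs_at_take)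
  ultimately have "c * p + i + length s \<le> k * p + j" by linarith
  with occ have "occurs_at s (periodic_extension u p (k * p + j)) (c * p + i)"
    by (intro occurs_at_periodic_extension[OF assms(1)]) (simp add: occurs_at_take)
  with i cx show "\<exists>i. occurs_at s (periodic_extension u p (k * p + j)) i \<and> i \<le> x \<and> x < i + length s"
    by (intro exI[of _ "c * p + i"]) auto
qed

lemma per_le_longest_covered_prefix_imp_left_seed:
  assumes "u \<noteq> []" and "prefix s u" and "per u \<le> longest_covered_prefix s u"
  shows "left_seed s u"
proof -
  define w where "w = periodic_extension u (per u) (length u * per u + longest_covered_prefix s u)"
  have per: "period u (per u)" by (rule period_per[OF assms(1)])
  then have "length u \<le> length u * per u"
    using mult_le_mono2[of 1 "per u" "length u"] by (simp add: period_def)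
  then have "length u \<le> length u * per u + longest_covered_prefix s u"
    by (rule trans_le_add1)
  then have "prefix u w"
    unfolding w_def by (rule prefix_periodic_extension[OF per])
  moreover have "covers s w"
    unfolding w_def using per assms(3)
    by (intro covers_periodic_extension covers_take_longest_covered_prefix
        longest_covered_prefix_le_length)
  ultimately show ?thesis
    using assms(2) prefix_imp_factor unfolding left_seed_def seed_def by blast
qed

lemma left_seed_iff_per_le_longest_covered_prefix:
  assumes "u \<noteq> []" and "prefix s u"
  shows "left_seed s u \<longleftrightarrow> per u \<le> longest_covered_prefix s u"
  using assms left_seed_imp_per_le_longest_covered_prefix
    per_le_longest_covered_prefix_imp_left_seed by blast

lemma prefix_if_covers_take:
  assumes "covers t (take j u)" and "0 < j" and "j \<le> length u"
  shows "prefix t u"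
proof -
  obtain i where "occurs_at t (take j u) i" "i \<le> 0" "0 < i + length t"
    using assms unfolding covers_def by fastforce
  then show ?thesis by (auto simp: occurs_at_take occurs_at_0_iff_prefix)
qed

theorem lemma1:
  fixes u s :: "'a list"
  assumes "u \<noteq> []" and "s \<noteq> []" and "prefix s u"
  shows "(left_seed s u \<longleftrightarrow> longest_covered_prefix s u \<ge> per u)
    \<and> ((left_seed s u \<and> (\<forall>t. left_seed t u \<longrightarrow> length s \<le> length t)) \<longrightarrow>
        (covers s (take (longest_covered_prefix s u) u)
         \<and> (\<forall>t. covers t (take (longest_covered_prefix s u) u) \<longrightarrow> length s \<le> length t)))"
proof (intro conjI impI allI)
  note criterion = left_seed_iff_per_le_longest_covered_prefix[OF assms(1)]
  show "left_seed s u \<longleftrightarrow> per u \<le> longest_covered_prefix s u"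
    by (rule criterion[OF assms(3)])
  show "covers s (take (longest_covered_prefix s u) u)"
    by (rule covers_take_longest_covered_prefix)
  fix t
  assume shortest: "left_seed s u \<and> (\<forall>t. left_seed t u \<longrightarrow> length s \<le> length t)"
    and cover: "covers t (take (longest_covered_prefix s u) u)"
  define j where "j = longest_covered_prefix s u"
  have j: "per u \<le> j" "j \<le> length u"
    using shortest criterion[OF assms(3)] longest_covered_prefix_le_length j_def by auto
  moreover have "0 < j" using j period_per[OF assms(1)] by (simp add: period_def)
  ultimately have "prefix t u" "j \<le> longest_covered_prefix t u"
    using cover prefix_if_covers_take covers_take_le_longest_covered_prefix j_def by blast+
  with j have "left_seed t u" using criterion by simp
  with shortest show "length s \<le> length t" by blast
qed

end
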